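(* Let $G$ be a finite $n$-player normal-form game with utilities $u_i(x)>0$ for all pure profiles $x\in S$, let $m_i=|S_i|$, and let $\alpha\ge 1$. Let $p^*$ be a generalized equilibrium with selfishness level $\alpha$, i.e. $p^*_i(x_i)=\Psi^*_i(x_i)^{\alpha}/\sum_{y_i\in S_i}\Psi^*_i(y_i)^{\alpha}$ for all $i$ and $x_i\in S_i$, where $\Psi^*_i(x_i)=u_i(x_i,p^*_{-i})$. Then for every player $i$, \[ 0\le \max_{x_i\in S_i}\Psi^*_i(x_i)-\sum_{x_i\in S_i}\Psi^*_i(x_i)\,p^*_i(x_i) < \frac{m_i-1}{e}\Big(\max_{x_i\in S_i}\Psi^*_i(x_i)\Big)\,\alpha^{-1}. \] In particular, the difference between each player's best-response payoff and his expected payoff at a generalized equilibrium tends to $0$ as $\alpha\to\infty$.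
   Context: A finite $n$-player normal-form game has players $1,\dots,n$, finite action sets $S_i$, $S=S_1\times\cdots\times S_n$, and utilities $u_i:S\to\mathbb{R}$. A mixed strategy profile is $p=(p_1,\dots,p_n)$ with each $p_i$ a probability distribution on $S_i$; $p_{-i}$ is the profile of the other players; $u_i(x_i,p_{-i})=\sum_{x_{-i}}u_i(x_i,x_{-i})\prod_{j\ne i}p_j(x_j)$. Note $\sum_{x_i}\Psi^*_i(x_i)p^*_i(x_i)=u_i(p^* )$, the expected payoff of player $i$. *)

theory Defs
  imports "HOL-Analysis.Analysis"
begin

text \<open>A finite n-player normal-form game: players are 0..n-1, player i has the
finite nonempty action set S i, pure profiles are the elements of
PiE {..<n} S, and u i x is the utility of player i at pure profile x.\<close>

definition is_game :: "nat \<Rightarrow> (nat \<Rightarrow> 'a set) \<Rightarrow> bool" where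
  "is_game n S \<longleftrightarrow> (\<forall>i<n. finite (S i) \<and> S i \<noteq> {})"

definition mixed_profile :: "nat \<Rightarrow> (nat \<Rightarrow> 'a set) \<Rightarrow> (nat \<Rightarrow> 'a \<Rightarrow> real) \<Rightarrow> bool" where
  "mixed_profile n S p \<longleftrightarrow>
     (\<forall>i<n. (\<forall>x\<in>S i. 0 \<le> p i x) \<and> (\<Sum>x\<in>S i. p i x) = 1)"

text \<open>u_i(x_i, p_{-i}): expected payoff of player i playing pure x_i
against the mixed strategies of the others.\<close>
definition payoff_vs :: "nat \<Rightarrow> (nat \<Rightarrow> 'a set) \<Rightarrow> (nat \<Rightarrow> (nat \<Rightarrow> 'a) \<Rightarrow> real)
    \<Rightarrow> (nat \<Rightarrow> 'a \<Rightarrow> real) \<Rightarrow> nat \<Rightarrow> 'a \<Rightarrow> real" where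
  "payoff_vs n S u p i xi =
     (\<Sum>y\<in>PiE ({..<n} - {i}) S. u i (y(i := xi)) * (\<Prod>j\<in>{..<n} - {i}. p j (y j)))"

definition gen_equilibrium :: "nat \<Rightarrow> (nat \<Rightarrow> 'a set) \<Rightarrow> (nat \<Rightarrow> (nat \<Rightarrow> 'a) \<Rightarrow> real)
    \<Rightarrow> real \<Rightarrow> (nat \<Rightarrow> 'a \<Rightarrow> real) \<Rightarrow> bool" where
  "gen_equilibrium n S u \<alpha> p \<longleftrightarrow> mixed_profile n S p \<and>
     (\<forall>i<n. \<forall>xi\<in>S i. p i xi =
        payoff_vs n S u p i xi powr \<alpha> / (\<Sum>yi\<in>S i. payoff_vs n S u p i yi powr \<alpha>))"

end

theory Submission
  imports Defs
begin

(* Fix a player i and write psi x for the payoff of the pure action x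
   against the others' equilibrium strategies, M for the best-response payoff and
   D = (SUM y. psi y powr alpha).  Since the equilibrium strategy is the power-weighted
   distribution p x = psi x powr alpha / D, the regret M - (SUM x. psi x * p x) is
   (SUM x. (M - psi x) * p x), a sum of nonnegative terms.  A maximiser x0 contributes
   zero, and D >= M powr alpha gives for every other action, with t = psi x / M,
     (M - psi x) * p x <= M * (1 - t) * t powr alpha < M / (e * alpha),
   the last step being the calculus fact max_{0<=t<=1} (1-t) t^a < 1/(e a). *)

text \<open>The elementary inequality behind the bound: on [0,1] the function (1-t) t^a stays
  strictly below 1/(e a).  Writing t = exp(-s) one has 1 - t < s, and
  a s exp(-a s) <= 1/e because exp(x - 1) >= x.\<close>
lemma one_minus_mult_powr_lt:
  fixes t a :: real
  assumes t0: "0 \<le> t" and t1: "t \<le> 1" and a: "0 < a"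
  shows "(1 - t) * t powr a < 1 / (exp 1 * a)"
proof -
  consider "t = 0" | "t = 1" | "0 < t" "t < 1" using t0 t1 by linarith
  then show ?thesis
  proof cases
    case 3
    define s where "s = - ln t"
    have "ln t < t - 1"
      using ln_le_minus_one[OF \<open>0 < t\<close>] ln_eq_minus_one[OF \<open>0 < t\<close>] \<open>t < 1\<close> by fastforce
    then have s_gt: "1 - t < s" by (simp add: s_def)
    have t_powr: "t powr a = exp (- (a * s))" using \<open>0 < t\<close> by (simp add: s_def powr_def)
    have exp_bound: "a * s \<le> exp (a * s) / exp 1"
      using exp_ge_add_one_self[of "a * s - 1"] by (simp add: exp_diff)
    have "(1 - t) * t powr a < s * exp (- (a * s))"
      using s_gt t_powr by (simp add: mult_strict_right_mono)
    also have "\<dots> = (a * s) / (a * exp (a * s))"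
      using a by (simp add: exp_minus field_simps)
    also have "\<dots> \<le> (exp (a * s) / exp 1) / (a * exp (a * s))"
      using exp_bound a by (intro divide_right_mono) auto
    also have "\<dots> = 1 / (exp 1 * a)" using a by (simp add: field_simps)
    finally show ?thesis .
  qed (use a in simp_all)
qed

lemma regret_term_lt:
  fixes v M D a :: real
  assumes v0: "0 \<le> v" and vM: "v \<le> M" and M0: "0 < M" and a: "0 < a"
    and MD: "M powr a \<le> D"
  shows "(M - v) * (v powr a / D) < M / (exp 1 * a)"
proof -
  have Ma_pos: "0 < M powr a" using M0 by simp
  have "v powr a / D \<le> v powr a / M powr a"
    using divide_left_mono[OF MD _ mult_pos_pos[OF order.strict_trans2[OF Ma_pos MD] Ma_pos]]
    by simp
  then have "(M - v) * (v powr a / D) \<le> (M - v) * (v powr a / M powr a)"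
    using vM by (intro mult_left_mono) auto
  also have "\<dots> = M * ((1 - v / M) * (v / M) powr a)"
    using M0 v0 by (simp add: powr_divide field_simps)
  also have "\<dots> < M * (1 / (exp 1 * a))"
    using one_minus_mult_powr_lt[of "v / M" a] M0 v0 vM a
    by (intro mult_strict_left_mono) auto
  finally show ?thesis by simp
qed

text \<open>The hypothesis that q sums to 1
  only excludes the degenerate case of a vanishing normaliser.\<close>
lemma power_weighted_regret:
  fixes A :: "'b set" and \<psi> q :: "'b \<Rightarrow> real" and a :: real
  assumes fin: "finite A" and card: "card A \<ge> 2"
    and \<psi>_nonneg: "\<And>x. x \<in> A \<Longrightarrow> 0 \<le> \<psi> x" and a: "0 < a"
    and q_def: "\<And>x. x \<in> A \<Longrightarrow> q x = \<psi> x powr a / (\<Sum>y\<in>A. \<psi> y powr a)"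
    and q_sum: "(\<Sum>x\<in>A. q x) = 1"
  shows "0 \<le> (MAX x\<in>A. \<psi> x) - (\<Sum>x\<in>A. \<psi> x * q x)
    \<and> (MAX x\<in>A. \<psi> x) - (\<Sum>x\<in>A. \<psi> x * q x)
        < (real (card A) - 1) / exp 1 * (MAX x\<in>A. \<psi> x) * (1 / a)"
proof -
  define M where "M = (MAX x\<in>A. \<psi> x)"
  define D where "D = (\<Sum>y\<in>A. \<psi> y powr a)"
  have ne: "A \<noteq> {}" using card by auto
  have le_M: "\<And>x. x \<in> A \<Longrightarrow> \<psi> x \<le> M" using fin by (simp add: M_def)
  have "M \<in> \<psi> ` A" using fin ne by (simp add: M_def)
  then obtain x0 where x0: "x0 \<in> A" "\<psi> x0 = M" by auto
  have q_nonneg: "\<And>x. x \<in> A \<Longrightarrow> 0 \<le> q x"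
    using q_def \<psi>_nonneg by (simp add: sum_nonneg)
  have MD: "M powr a \<le> D"
    using member_le_sum[of x0 A "\<lambda>y. \<psi> y powr a"] fin x0 by (simp add: D_def)
  have M_pos: "0 < M"
  proof (rule ccontr)
    assume "\<not> 0 < M"
    then have "\<And>x. x \<in> A \<Longrightarrow> \<psi> x = 0" using le_M \<psi>_nonneg by force
    then show False using q_sum q_def by simp
  qed
  define loss where "loss x = (M - \<psi> x) * q x" for x
  have regret_eq: "M - (\<Sum>x\<in>A. \<psi> x * q x) = (\<Sum>x\<in>A. loss x)"
    using q_sum by (simp add: loss_def algebra_simps sum_subtractf flip: sum_distrib_left)
  have "0 \<le> (\<Sum>x\<in>A. loss x)"
    using le_M q_nonneg by (auto simp: loss_def intro: sum_nonneg)
  moreover have "(\<Sum>x\<in>A. loss x) < (real (card A) - 1) / exp 1 * M * (1 / a)"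
  proof -
    have "A - {x0} \<noteq> {}"
    proof
      assume "A - {x0} = {}"
      then have "card A \<le> card {x0}" by (intro card_mono) auto
      then show False using card by simp
    qed
    have "(\<Sum>x\<in>A. loss x) = (\<Sum>x\<in>A - {x0}. loss x)"
      using fin x0 by (simp add: sum.remove loss_def)
    also have "\<dots> < (\<Sum>x\<in>A - {x0}. M / (exp 1 * a))"
      using fin \<open>A - {x0} \<noteq> {}\<close> regret_term_lt[OF \<psi>_nonneg le_M M_pos a MD]
      by (intro sum_strict_mono) (auto simp: loss_def q_def D_def)
    also have "\<dots> = (real (card A) - 1) / exp 1 * M * (1 / a)"
      using fin x0 card by (simp add: of_nat_diff)
    finally show ?thesis .
  qed
  ultimately show ?thesis using regret_eq by (simp add: M_def)
qed

lemma payoff_vs_nonneg: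
  assumes i: "i < n" and xi: "xi \<in> S i" and mp: "mixed_profile n S p"
    and upos: "\<And>x. x \<in> PiE {..<n} S \<Longrightarrow> u i x > 0"
  shows "0 \<le> payoff_vs n S u p i xi"
  unfolding payoff_vs_def
proof (rule sum_nonneg)
  fix y assume y: "y \<in> PiE ({..<n} - {i}) S"
  have "y(i := xi) \<in> PiE {..<n} S"
    using i xi y unfolding PiE_def Pi_def extensional_def by auto
  then have "0 < u i (y(i := xi))" by (rule upos)
  moreover have "0 \<le> (\<Prod>j\<in>{..<n} - {i}. p j (y j))"
    using y mp by (intro prod_nonneg) (auto simp: mixed_profile_def PiE_def Pi_def)
  ultimately show "0 \<le> u i (y(i := xi)) * (\<Prod>j\<in>{..<n} - {i}. p j (y j))"
    by simp
qed

theorem mainTheorem2: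
  fixes n :: nat and S :: "nat \<Rightarrow> 'a set" and u :: "nat \<Rightarrow> (nat \<Rightarrow> 'a) \<Rightarrow> real"
    and p :: "nat \<Rightarrow> 'a \<Rightarrow> real" and \<alpha> :: real
  assumes game: "is_game n S"
    and upos: "\<And>i x. i < n \<Longrightarrow> x \<in> PiE {..<n} S \<Longrightarrow> u i x > 0"
    and two: "\<And>i. i < n \<Longrightarrow> card (S i) \<ge> 2"
    and alpha: "\<alpha> \<ge> 1"
    and eq: "gen_equilibrium n S u \<alpha> p"
  shows "\<forall>i<n.
     0 \<le> (MAX xi\<in>S i. payoff_vs n S u p i xi)
          - (\<Sum>xi\<in>S i. payoff_vs n S u p i xi * p i xi)
   \<and> (MAX xi\<in>S i. payoff_vs n S u p i xi)
          - (\<Sum>xi\<in>S i. payoff_vs n S u p i xi * p i xi)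
     < (real (card (S i)) - 1) / exp 1 * (MAX xi\<in>S i. payoff_vs n S u p i xi) * (1 / \<alpha>)"
proof (intro allI impI)
  fix i assume i: "i < n"
  have mp: "mixed_profile n S p" using eq by (simp add: gen_equilibrium_def)
  show "0 \<le> (MAX xi\<in>S i. payoff_vs n S u p i xi)
          - (\<Sum>xi\<in>S i. payoff_vs n S u p i xi * p i xi)
   \<and> (MAX xi\<in>S i. payoff_vs n S u p i xi)
          - (\<Sum>xi\<in>S i. payoff_vs n S u p i xi * p i xi)
     < (real (card (S i)) - 1) / exp 1 * (MAX xi\<in>S i. payoff_vs n S u p i xi) * (1 / \<alpha>)"
  proof (rule power_weighted_regret)
    show "finite (S i)" using game i by (simp add: is_game_def)
    show "card (S i) \<ge> 2" using two i .
    show "0 < \<alpha>" using alpha by simp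
    show "\<And>x. x \<in> S i \<Longrightarrow> 0 \<le> payoff_vs n S u p i x"
      using payoff_vs_nonneg[OF i _ mp] upos i by blast
    show "\<And>x. x \<in> S i \<Longrightarrow> p i x = payoff_vs n S u p i x powr \<alpha>
        / (\<Sum>y\<in>S i. payoff_vs n S u p i y powr \<alpha>)"
      using eq i by (simp add: gen_equilibrium_def)
    show "(\<Sum>x\<in>S i. p i x) = 1" using mp i by (simp add: mixed_profile_def)
  qed
qed

end
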